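(* Let $G_1=(g_{kj})$ and $G_2=(g'_{kj})$ be semi-normalized Gram matrices (for tuples of the same type $m,i$), represented by the vectors $V_{G_1},V_{G_2}\in\mathbb H^{t}$. Then $G_1$ and $G_2$ are equivalent (i.e. $G_1=D^*G_2D$ for some nonsingular diagonal quaternionic matrix $D$) if and only if $O_{V_{G_1}}=O_{V_{G_2}}$, where $O_V=\{\bar\mu V\mu:\mu\in\mathrm{Sp}(1)\}$.
   Context: Setting: $m\ge4$, $3\le i\le m$; tuples $p=(p_1,\dots,p_m)$ of distinct points of $\overline{\mathbf H^n_{\mathbb H}}$ with the first $i$ points in $\partial\mathbf H^n_{\mathbb H}$ and the rest in $\mathbf H^n_{\mathbb H}$, where $\mathbb H^{n,1}$ is the right quaternionic space $\mathbb H^{n+1}$ with form $\langle\mathbf z,\mathbf w\rangle=\bar w_{n+1}z_1+\bar w_2z_2+\cdots+\bar w_nz_n+\bar w_1z_{n+1}$. The Gram matrix of a lift $(\mathbf p_1,\dots,\mathbf p_m)$ is $g_{kj}=\langle\mathbf p_j,\mathbf p_k\rangle$; it is semi-normalized if $g_{kk}=0$ for $k\le i$, $g_{kk}=-1$ for $k>i$, $g_{1j}=1$ for $2\le j\le i$, $|g_{23}|=1$, and $g_{1j}=r_{1j}>0$ real for $i<j\le m$. Such a matrix is represented by $V_G=(r_{1(i+1)},\dots,r_{1m},g_{23},g_{24},\dots,g_{2m},g_{34},\dots,g_{3m},\dots,g_{(m-1)m})\in\mathbb H^{t}$, $t=\frac{m^2-m-2i+2}{2}$. $\mathrm{Sp}(1)$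 is the group of unit quaternions, acting on $\mathbb H^t$ componentwise by $V\mapsto\bar\mu V\mu$. *)

theory Defs
  imports Complex_Main
begin

datatype quat = Quat (qRe: real) (qI: real) (qJ: real) (qK: real)

instantiation quat :: "{zero, one, plus, minus, uminus, times}"
begin
definition "0 = Quat 0 0 0 0"
definition "1 = Quat 1 0 0 0"
definition "x + y = Quat (qRe x + qRe y) (qI x + qI y) (qJ x + qJ y) (qK x + qK y)"
definition "x - y = Quat (qRe x - qRe y) (qI x - qI y) (qJ x - qJ y) (qK x - qK y)"
definition "- x = Quat (- qRe x) (- qI x) (- qJ x) (- qK x)"
definition "x * y = Quat
   (qRe x * qRe y - qI x * qI y - qJ x * qJ y - qK x * qK y)
   (qRe x * qI y + qI x * qRe y + qJ x * qK y - qK x * qJ y)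
   (qRe x * qJ y - qI x * qK y + qJ x * qRe y + qK x * qI y)
   (qRe x * qK y + qI x * qJ y - qJ x * qI y + qK x * qRe y)"
instance ..
end

definition qcnj :: "quat \<Rightarrow> quat" where
  "qcnj x = Quat (qRe x) (- qI x) (- qJ x) (- qK x)"

definition qnorm :: "quat \<Rightarrow> real" where
  "qnorm x = sqrt ((qRe x)^2 + (qI x)^2 + (qJ x)^2 + (qK x)^2)"

definition qreal :: "real \<Rightarrow> quat" where
  "qreal r = Quat r 0 0 0"

text \<open>Vectors of H^{n,1} = H^{n+1} (right H-module) are functions on indices 1..n+1.
  The Hermitian form
  <z,w> = conj(w_{n+1}) z_1 + conj(w_2) z_2 + ... + conj(w_n) z_n + conj(w_1) z_{n+1}.\<close>

definition hform :: "nat \<Rightarrow> (nat \<Rightarrow> quat) \<Rightarrow> (nat \<Rightarrow> quat) \<Rightarrow> quat" where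
  "hform n z w = qcnj (w (n+1)) * z 1
      + foldr (\<lambda>k acc. qcnj (w k) * z k + acc) [2..<n+1] 0
      + qcnj (w 1) * z (n+1)"

definition nonzero_vec :: "nat \<Rightarrow> (nat \<Rightarrow> quat) \<Rightarrow> bool" where
  "nonzero_vec n z \<longleftrightarrow> (\<exists>k\<in>{1..n+1}. z k \<noteq> 0)"

text \<open>z and w represent the same point of projective space P(H^{n,1})
  iff z = w \<lambda> for some quaternion \<lambda> (right scalar multiplication).\<close>
definition same_point :: "nat \<Rightarrow> (nat \<Rightarrow> quat) \<Rightarrow> (nat \<Rightarrow> quat) \<Rightarrow> bool" where
  "same_point n z w \<longleftrightarrow> (\<exists>c. \<forall>k\<in>{1..n+1}. z k = w k * c)"

text \<open>Negative vectors (lifts of points of H^n_H) and null nonzero vectors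
  (lifts of points of the boundary).\<close>
definition negative_vec :: "nat \<Rightarrow> (nat \<Rightarrow> quat) \<Rightarrow> bool" where
  "negative_vec n z \<longleftrightarrow> (\<exists>c<0. hform n z z = qreal c)"

definition null_vec :: "nat \<Rightarrow> (nat \<Rightarrow> quat) \<Rightarrow> bool" where
  "null_vec n z \<longleftrightarrow> nonzero_vec n z \<and> hform n z z = 0"

text \<open>A lift (p_1,...,p_m) of a tuple of distinct points of the closure of H^n_H,
  the first i on the boundary and the rest inside.\<close>
definition admissible_lift ::
  "nat \<Rightarrow> nat \<Rightarrow> nat \<Rightarrow> (nat \<Rightarrow> nat \<Rightarrow> quat) \<Rightarrow> bool" where
  "admissible_lift n m i P \<longleftrightarrow>
     (\<forall>k\<in>{1..i}. null_vec n (P k)) \<and>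
     (\<forall>k\<in>{i+1..m}. negative_vec n (P k)) \<and>
     (\<forall>k\<in>{1..m}. \<forall>j\<in>{1..m}. k \<noteq> j \<longrightarrow> \<not> same_point n (P k) (P j))"

definition is_gram_of :: "nat \<Rightarrow> nat \<Rightarrow> (nat \<Rightarrow> nat \<Rightarrow> quat) \<Rightarrow> (nat \<Rightarrow> nat \<Rightarrow> quat) \<Rightarrow> bool" where
  "is_gram_of n m P G \<longleftrightarrow> (\<forall>k\<in>{1..m}. \<forall>j\<in>{1..m}. G k j = hform n (P j) (P k))"

definition semi_normalized :: "nat \<Rightarrow> nat \<Rightarrow> (nat \<Rightarrow> nat \<Rightarrow> quat) \<Rightarrow> bool" where
  "semi_normalized m i G \<longleftrightarrow>
     (\<forall>k\<in>{1..i}. G k k = 0) \<and>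
     (\<forall>k\<in>{i+1..m}. G k k = qreal (-1)) \<and>
     (\<forall>j\<in>{2..i}. G 1 j = 1) \<and>
     qnorm (G 2 3) = 1 \<and>
     (\<forall>j\<in>{i+1..m}. \<exists>r>0. G 1 j = qreal r)"

definition seminormalized_gram :: "nat \<Rightarrow> nat \<Rightarrow> nat \<Rightarrow> (nat \<Rightarrow> nat \<Rightarrow> quat) \<Rightarrow> bool" where
  "seminormalized_gram n m i G \<longleftrightarrow>
     (\<exists>P. admissible_lift n m i P \<and> is_gram_of n m P G) \<and> semi_normalized m i G"

text \<open>The vector V_G = (r_{1(i+1)},...,r_{1m}, g_{23},...,g_{2m}, g_{34},...,g_{3m}, ..., g_{(m-1)m}),
  as a list of length t = (m^2-m-2i+2)/2.\<close>
definition VG :: "nat \<Rightarrow> nat \<Rightarrow> (nat \<Rightarrow> nat \<Rightarrow> quat) \<Rightarrow> quat list" where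
  "VG m i G = map (\<lambda>j. G 1 j) [i+1..<m+1]
      @ concat (map (\<lambda>k. map (\<lambda>j. G k j) [k+1..<m+1]) [2..<m])"

definition sp1_orbit :: "quat list \<Rightarrow> quat list set" where
  "sp1_orbit V = {map (\<lambda>x. qcnj \<mu> * x * \<mu>) V | \<mu>. qnorm \<mu> = 1}"

text \<open>Equivalence: G1 = D^* G2 D for a nonsingular diagonal D = diag(d_1,...,d_m),
  i.e. entrywise (G1)_{kj} = conj(d_k) (G2)_{kj} d_j.\<close>
definition gram_equiv :: "nat \<Rightarrow> (nat \<Rightarrow> nat \<Rightarrow> quat) \<Rightarrow> (nat \<Rightarrow> nat \<Rightarrow> quat) \<Rightarrow> bool" where
  "gram_equiv m G1 G2 \<longleftrightarrow>
     (\<exists>d :: nat \<Rightarrow> quat. (\<forall>k\<in>{1..m}. d k \<noteq> 0) \<and>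
        (\<forall>k\<in>{1..m}. \<forall>j\<in>{1..m}. G1 k j = qcnj (d k) * G2 k j * d j))"

end

theory Submission
  imports Defs
begin

text \<open>A diagonal equivalence D between semi-normalized Gram matrices is forced to be a scalar
  unit \<mu>: the entries g_{12} = g_{13} = 1 and |g_{23}| = 1 force |d_1| = 1 and d_j = d_1 for
  j \<le> i, while g_{jj} = -1 and g_{1j} > 0 do the same for j > i. Conversely, conjugation by a
  unit fixes the normalized entries, and Hermitian symmetry recovers the lower triangle from the
  upper one; the remaining upper-triangular entries are exactly the coordinates of V_G.\<close>

lemmas quat_ops_defs =
  zero_quat_def one_quat_def plus_quat_def minus_quat_def uminus_quat_def times_quat_def

instance quat :: ring_1
  by standard (simp_all add: quat_ops_defs algebra_simps)

lemma qcnj_mult: "qcnj (x * y) = qcnj y * qcnj x"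
  by (simp add: qcnj_def quat_ops_defs algebra_simps)

lemma qcnj_add: "qcnj (x + y) = qcnj x + qcnj y"
  by (simp add: qcnj_def quat_ops_defs)

lemma qcnj_qcnj [simp]: "qcnj (qcnj x) = x"
  by (simp add: qcnj_def)

lemma qcnj_0 [simp]: "qcnj 0 = 0" and qcnj_1 [simp]: "qcnj 1 = 1"
  by (simp_all add: qcnj_def quat_ops_defs)

lemma qreal_1 [simp]: "qreal 1 = 1"
  by (simp add: qreal_def quat_ops_defs)

lemma qreal_eq_iff [simp]: "qreal r = qreal s \<longleftrightarrow> r = s"
  by (simp add: qreal_def)

lemma qreal_mult: "qreal r * qreal s = qreal (r * s)"
  by (simp add: qreal_def quat_ops_defs)

lemma qreal_commute: "qreal r * x = x * qreal r"
  by (simp add: qreal_def quat_ops_defs)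

lemma qnorm_nonneg: "0 \<le> qnorm x"
  by (simp add: qnorm_def)

lemma qnorm_eq_0_iff: "qnorm x = 0 \<longleftrightarrow> x = 0"
  by (cases x) (simp add: qnorm_def quat_ops_defs add_nonneg_eq_0_iff)

lemma qnorm_mult: "qnorm (x * y) = qnorm x * qnorm y"
  unfolding qnorm_def
  by (simp add: real_sqrt_mult[symmetric] quat_ops_defs) (simp add: algebra_simps power2_eq_square)

lemma qnorm_qcnj [simp]: "qnorm (qcnj x) = qnorm x"
  by (simp add: qnorm_def qcnj_def)

lemma qnorm_qreal [simp]: "qnorm (qreal r) = \<bar>r\<bar>"
  by (simp add: qnorm_def qreal_def)

lemma qnorm_1 [simp]: "qnorm 1 = 1"
  by (simp add: qnorm_def quat_ops_defs)

lemma mult_qcnj: "x * qcnj x = qreal ((qnorm x)\<^sup>2)"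
  by (simp add: qnorm_def qreal_def qcnj_def quat_ops_defs algebra_simps power2_eq_square)

lemma qcnj_mult_self: "qcnj x * x = qreal ((qnorm x)\<^sup>2)"
  by (simp add: qnorm_def qreal_def qcnj_def quat_ops_defs algebra_simps power2_eq_square)

lemma qnorm_eq_1_if_square: "qnorm x * qnorm x = 1 \<Longrightarrow> qnorm x = 1"
  using qnorm_nonneg[of x] by (metis abs_of_nonneg power2_eq_square real_sqrt_abs real_sqrt_one)

lemma unit_mult_qcnj [simp]: "qnorm u = 1 \<Longrightarrow> u * qcnj u = 1"
  by (simp add: mult_qcnj)

lemma unit_qcnj_mult [simp]: "qnorm u = 1 \<Longrightarrow> qcnj u * u = 1"
  by (simp add: qcnj_mult_self)

lemma unit_conj_qreal [simp]: "qnorm u = 1 \<Longrightarrow> qcnj u * qreal r * u = qreal r"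
  by (metis mult.assoc mult_1 qreal_commute unit_qcnj_mult)

lemma unit_qcnj_mult_eq_1: "qnorm u = 1 \<Longrightarrow> qcnj u * x = 1 \<Longrightarrow> x = u"
  by (metis mult.assoc mult.right_neutral mult_1 unit_mult_qcnj)

lemma qreal_eq_qreal_mult_unit:
  assumes "0 < r" "0 < s" "qnorm u = 1" and eq: "qreal r = qreal s * u"
  shows "u = 1"
proof -
  have "r = s"
    using arg_cong[OF eq, of qnorm] \<open>0 < r\<close> \<open>0 < s\<close> \<open>qnorm u = 1\<close> by (simp add: qnorm_mult)
  then have "qreal (1 / s) * qreal s * 1 = qreal (1 / s) * qreal s * u"
    using eq by (simp add: mult.assoc)
  then show ?thesis
    using \<open>0 < s\<close> by (simp add: qreal_mult)
qed

lemma sp1_orbit_map_unit: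
  assumes "qnorm \<mu> = 1"
  shows "sp1_orbit (map (\<lambda>x. qcnj \<mu> * x * \<mu>) V) = sp1_orbit V"
proof (intro equalityI subsetI)
  fix W assume "W \<in> sp1_orbit (map (\<lambda>x. qcnj \<mu> * x * \<mu>) V)"
  then obtain \<nu> where "qnorm \<nu> = 1" "W = map (\<lambda>x. qcnj \<nu> * (qcnj \<mu> * x * \<mu>) * \<nu>) V"
    unfolding sp1_orbit_def by auto
  moreover have "qcnj \<nu> * (qcnj \<mu> * x * \<mu>) * \<nu> = qcnj (\<mu> * \<nu>) * x * (\<mu> * \<nu>)" for x
    by (simp add: qcnj_mult mult.assoc)
  ultimately show "W \<in> sp1_orbit V"
    unfolding sp1_orbit_def using assms by (auto simp: qnorm_mult)
next
  fix W assume "W \<in> sp1_orbit V"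
  then obtain \<nu> where \<nu>: "qnorm \<nu> = 1" "W = map (\<lambda>x. qcnj \<nu> * x * \<nu>) V"
    unfolding sp1_orbit_def by auto
  have "qcnj \<nu> * x * \<nu> = qcnj (qcnj \<mu> * \<nu>) * (qcnj \<mu> * x * \<mu>) * (qcnj \<mu> * \<nu>)" for x
  proof -
    have "qcnj (qcnj \<mu> * \<nu>) * (qcnj \<mu> * x * \<mu>) * (qcnj \<mu> * \<nu>)
        = qcnj \<nu> * (\<mu> * qcnj \<mu>) * x * (\<mu> * qcnj \<mu>) * \<nu>"
      by (simp add: qcnj_mult mult.assoc)
    then show ?thesis
      using assms by simp
  qed
  with \<nu> show "W \<in> sp1_orbit (map (\<lambda>x. qcnj \<mu> * x * \<mu>) V)"
    unfolding sp1_orbit_def using assms by (auto simp: qnorm_mult)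
qed

lemma sp1_orbit_eq_iff:
  "sp1_orbit V = sp1_orbit W \<longleftrightarrow> (\<exists>\<mu>. qnorm \<mu> = 1 \<and> V = map (\<lambda>x. qcnj \<mu> * x * \<mu>) W)"
proof
  assume eq: "sp1_orbit V = sp1_orbit W"
  have "V \<in> sp1_orbit V"
    unfolding sp1_orbit_def by (auto intro!: exI[of _ 1])
  then have "V \<in> sp1_orbit W"
    using eq by simp
  then show "\<exists>\<mu>. qnorm \<mu> = 1 \<and> V = map (\<lambda>x. qcnj \<mu> * x * \<mu>) W"
    unfolding sp1_orbit_def by auto
qed (auto simp: sp1_orbit_map_unit)

lemma concat_map_eq_imp_eq:
  "\<forall>k\<in>set L. length (F k) = length (H k) \<Longrightarrow> concat (map F L) = concat (map H L)
   \<Longrightarrow> \<forall>k\<in>set L. F k = H k"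
  by (induction L) auto

lemma VG_eq_map_iff:
  "VG m i G1 = map f (VG m i G2) \<longleftrightarrow>
     (\<forall>j\<in>{i+1..m}. G1 1 j = f (G2 1 j)) \<and>
     (\<forall>k j. 2 \<le> k \<and> k < j \<and> j \<le> m \<longrightarrow> G1 k j = f (G2 k j))"
    (is "_ \<longleftrightarrow> ?first_row \<and> ?upper")
proof -
  have VG_eq: "VG m i G1 = map f (VG m i G2) \<longleftrightarrow>
      map (G1 1) [i+1..<m+1] = map (f \<circ> G2 1) [i+1..<m+1] \<and>
      concat (map (\<lambda>k. map (G1 k) [k+1..<m+1]) [2..<m]) =
      concat (map (\<lambda>k. map (f \<circ> G2 k) [k+1..<m+1]) [2..<m])"
    unfolding VG_def map_append map_concat map_map by (simp add: comp_def append_eq_append_conv)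
  have "map (G1 1) [i+1..<m+1] = map (f \<circ> G2 1) [i+1..<m+1] \<longleftrightarrow> ?first_row"
    by auto
  moreover have "concat (map (\<lambda>k. map (G1 k) [k+1..<m+1]) [2..<m]) =
      concat (map (\<lambda>k. map (f \<circ> G2 k) [k+1..<m+1]) [2..<m]) \<longleftrightarrow> ?upper"
  proof
    assume "concat (map (\<lambda>k. map (G1 k) [k+1..<m+1]) [2..<m]) =
      concat (map (\<lambda>k. map (f \<circ> G2 k) [k+1..<m+1]) [2..<m])"
    then have "\<forall>k\<in>set [2..<m]. map (G1 k) [k+1..<m+1] = map (f \<circ> G2 k) [k+1..<m+1]"
      by (intro concat_map_eq_imp_eq) simp_all
    then show ?upper
      by force
  qed (auto intro!: arg_cong[where f = concat] map_cong)
  ultimately show ?thesis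
    using VG_eq by blast
qed

lemma hform_qcnj: "hform n z w = qcnj (hform n w z)"
proof -
  have foldr_qcnj: "qcnj (foldr (\<lambda>k acc. qcnj (z k) * w k + acc) ks 0)
      = foldr (\<lambda>k acc. qcnj (w k) * z k + acc) ks 0" for ks
    by (induction ks) (simp_all add: qcnj_add qcnj_mult)
  show ?thesis
    unfolding hform_def qcnj_add qcnj_mult qcnj_qcnj foldr_qcnj by (simp only: add_ac)
qed

lemma seminormalized_gram_hermitian:
  "seminormalized_gram n m i G \<Longrightarrow> k \<in> {1..m} \<Longrightarrow> j \<in> {1..m} \<Longrightarrow> G k j = qcnj (G j k)"
  unfolding seminormalized_gram_def is_gram_of_def by (metis hform_qcnj)

lemma semi_normalized_diagonal_scaling_unit:
  assumes "3 \<le> i" "i \<le> m" and S1: "semi_normalized m i G1" and S2: "semi_normalized m i G2"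
    and dG: "\<forall>k\<in>{1..m}. \<forall>j\<in>{1..m}. G1 k j = qcnj (d k) * G2 k j * d j"
  shows "qnorm (d 1) = 1"
proof -
  have "qcnj (d 1) * d j = 1" if "j \<in> {2..i}" for j
    using S1 S2 that dG[rule_format, of 1 j] \<open>i \<le> m\<close> by (simp add: semi_normalized_def)
  then have n1: "qnorm (d 1) * qnorm (d j) = 1" if "j \<in> {2..i}" for j
    using that by (metis qnorm_1 qnorm_mult qnorm_qcnj)
  have n12: "qnorm (d 1) * qnorm (d 2) = 1" and n13: "qnorm (d 1) * qnorm (d 3) = 1"
    using n1 \<open>3 \<le> i\<close> by auto
  have "G1 2 3 = qcnj (d 2) * G2 2 3 * d 3"
    using dG assms by auto
  moreover have "qnorm (G1 2 3) = 1" "qnorm (G2 2 3) = 1"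
    using S1 S2 unfolding semi_normalized_def by auto
  ultimately have n23: "qnorm (d 2) * qnorm (d 3) = 1"
    by (metis qnorm_mult qnorm_qcnj mult.right_neutral)
  have "qnorm (d 2) = qnorm (d 3)"
    using n12 n13 by (metis mult_left_cancel mult_zero_left zero_neq_one)
  then have "qnorm (d 2) = 1"
    using n23 by (intro qnorm_eq_1_if_square) simp
  then show ?thesis
    using n12 by simp
qed

lemma semi_normalized_diagonal_scaling_const:
  assumes "3 \<le> i" "i \<le> m" and S1: "semi_normalized m i G1" and S2: "semi_normalized m i G2"
    and dG: "\<forall>k\<in>{1..m}. \<forall>j\<in>{1..m}. G1 k j = qcnj (d k) * G2 k j * d j"
    and j: "j \<in> {1..m}"
  shows "d j = d 1"
proof -
  have d1: "qnorm (d 1) = 1"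
    using semi_normalized_diagonal_scaling_unit[OF assms(1-5)] .
  have first_row: "G1 1 j = qcnj (d 1) * G2 1 j * d j"
    using dG j by simp
  have "qcnj (d 1) * d j = 1"
  proof (cases "j \<le> i")
    case True
    show ?thesis
    proof (cases "j = 1")
      case False
      then have "G1 1 j = 1" "G2 1 j = 1"
        using S1 S2 True j unfolding semi_normalized_def by auto
      then show ?thesis
        using first_row by simp
    qed (use d1 in simp)
  next
    case False
    then have j_inner: "j \<in> {i+1..m}"
      using j by auto
    have "G1 j j = qreal (-1)" "G2 j j = qreal (-1)"
      using S1 S2 j_inner unfolding semi_normalized_def by auto
    moreover have "G1 j j = qcnj (d j) * G2 j j * d j"
      using dG j by simp
    ultimately have "qreal (-1) = qreal (-1) * (qcnj (d j) * d j)"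
      by (simp add: qreal_commute mult.assoc)
    then have "qnorm (d j) * qnorm (d j) = 1"
      by (simp add: qcnj_mult_self qreal_mult power2_eq_square)
    then have dj: "qnorm (d j) = 1"
      by (rule qnorm_eq_1_if_square)
    obtain r1 r2 where r: "0 < r1" "0 < r2" "G1 1 j = qreal r1" "G2 1 j = qreal r2"
      using S1 S2 j_inner unfolding semi_normalized_def by meson
    then have "qreal r1 = qreal r2 * (qcnj (d 1) * d j)"
      using first_row by (simp add: qreal_commute mult.assoc)
    moreover have "qnorm (qcnj (d 1) * d j) = 1"
      using d1 dj by (simp add: qnorm_mult)
    ultimately show ?thesis
      using r by (intro qreal_eq_qreal_mult_unit[of r1 r2]) simp_all
  qed
  then show ?thesis
    by (rule unit_qcnj_mult_eq_1[OF d1])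
qed

lemma gram_equiv_iff_unit_conj:
  assumes "3 \<le> i" "i \<le> m" "semi_normalized m i G1" "semi_normalized m i G2"
  shows "gram_equiv m G1 G2 \<longleftrightarrow>
    (\<exists>\<mu>. qnorm \<mu> = 1 \<and> (\<forall>k\<in>{1..m}. \<forall>j\<in>{1..m}. G1 k j = qcnj \<mu> * G2 k j * \<mu>))"
proof
  assume "gram_equiv m G1 G2"
  then obtain d where dG: "\<forall>k\<in>{1..m}. \<forall>j\<in>{1..m}. G1 k j = qcnj (d k) * G2 k j * d j"
    unfolding gram_equiv_def by blast
  have "\<forall>k\<in>{1..m}. \<forall>j\<in>{1..m}. G1 k j = qcnj (d 1) * G2 k j * d 1"
    using dG semi_normalized_diagonal_scaling_const[OF assms dG] by metis
  then show "\<exists>\<mu>. qnorm \<mu> = 1 \<and> (\<forall>k\<in>{1..m}. \<forall>j\<in>{1..m}. G1 k j = qcnj \<mu> * G2 k j * \<mu>)"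
    using semi_normalized_diagonal_scaling_unit[OF assms dG] by blast
next
  assume "\<exists>\<mu>. qnorm \<mu> = 1 \<and> (\<forall>k\<in>{1..m}. \<forall>j\<in>{1..m}. G1 k j = qcnj \<mu> * G2 k j * \<mu>)"
  then obtain \<mu> where "qnorm \<mu> = 1" "\<forall>k\<in>{1..m}. \<forall>j\<in>{1..m}. G1 k j = qcnj \<mu> * G2 k j * \<mu>"
    by blast
  moreover have "\<mu> \<noteq> 0"
    using \<open>qnorm \<mu> = 1\<close> qnorm_eq_0_iff by force
  ultimately show "gram_equiv m G1 G2"
    unfolding gram_equiv_def by (intro exI[of _ "\<lambda>_. \<mu>"]) simp
qed

lemma hermitian_unit_conj_if_upper:
  fixes G1 G2 :: "nat \<Rightarrow> nat \<Rightarrow> quat"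
  assumes H1: "\<And>k j. k \<in> {1..m} \<Longrightarrow> j \<in> {1..m} \<Longrightarrow> G1 k j = qcnj (G1 j k)"
    and H2: "\<And>k j. k \<in> {1..m} \<Longrightarrow> j \<in> {1..m} \<Longrightarrow> G2 k j = qcnj (G2 j k)"
    and upper: "\<And>k j. 1 \<le> k \<Longrightarrow> k \<le> j \<Longrightarrow> j \<le> m \<Longrightarrow> G1 k j = qcnj \<mu> * G2 k j * \<mu>"
    and kj: "k \<in> {1..m}" "j \<in> {1..m}"
  shows "G1 k j = qcnj \<mu> * G2 k j * \<mu>"
proof (cases "k \<le> j")
  case False
  then have "j \<le> k"
    by simp
  have "G1 k j = qcnj (G1 j k)"
    using H1 kj .
  also have "\<dots> = qcnj (qcnj \<mu> * G2 j k * \<mu>)"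
    using upper[of j k] kj \<open>j \<le> k\<close> by simp
  also have "\<dots> = qcnj \<mu> * qcnj (G2 j k) * \<mu>"
    by (simp add: qcnj_mult mult.assoc)
  also have "qcnj (G2 j k) = G2 k j"
    using H2[OF kj] by simp
  finally show ?thesis .
qed (use upper kj in simp)

lemma seminormalized_gram_unit_conj_iff:
  assumes "seminormalized_gram n m i G1" "seminormalized_gram n m i G2" "qnorm \<mu> = 1"
  shows "(\<forall>k\<in>{1..m}. \<forall>j\<in>{1..m}. G1 k j = qcnj \<mu> * G2 k j * \<mu>) \<longleftrightarrow>
    VG m i G1 = map (\<lambda>x. qcnj \<mu> * x * \<mu>) (VG m i G2)"
proof
  assume "\<forall>k\<in>{1..m}. \<forall>j\<in>{1..m}. G1 k j = qcnj \<mu> * G2 k j * \<mu>"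
  then show "VG m i G1 = map (\<lambda>x. qcnj \<mu> * x * \<mu>) (VG m i G2)"
    unfolding VG_eq_map_iff by auto
next
  assume "VG m i G1 = map (\<lambda>x. qcnj \<mu> * x * \<mu>) (VG m i G2)"
  then have VG_entries:
    "\<forall>j\<in>{i+1..m}. G1 1 j = qcnj \<mu> * G2 1 j * \<mu>"
    "\<forall>k j. 2 \<le> k \<and> k < j \<and> j \<le> m \<longrightarrow> G1 k j = qcnj \<mu> * G2 k j * \<mu>"
    unfolding VG_eq_map_iff by auto
  have S1: "semi_normalized m i G1" and S2: "semi_normalized m i G2"
    using assms unfolding seminormalized_gram_def by auto
  \<comment> \<open>The entries normalized to 0, -1 and 1 are fixed by conjugation with a unit.\<close>
  have diagonal: "G1 k k = qcnj \<mu> * G2 k k * \<mu>" if "k \<in> {1..m}" for k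
  proof (cases "k \<le> i")
    case True
    then show ?thesis
      using that S1 S2 by (simp add: semi_normalized_def)
  next
    case False
    then show ?thesis
      using that S1 S2 assms(3) by (simp add: semi_normalized_def)
  qed
  have first_row: "G1 1 j = qcnj \<mu> * G2 1 j * \<mu>" if "j \<in> {2..i}" for j
    using that S1 S2 assms(3) by (simp add: semi_normalized_def)
  have upper: "G1 k j = qcnj \<mu> * G2 k j * \<mu>" if kj: "1 \<le> k" "k \<le> j" "j \<le> m" for k j
  proof -
    consider "k = j" | "k = 1" "2 \<le> j" "j \<le> i" | "k = 1" "i < j" | "2 \<le> k" "k < j"
      using kj by linarith
    then show ?thesis
      by cases (use kj diagonal first_row VG_entries in auto)
  qed
  then show "\<forall>k\<in>{1..m}. \<forall>j\<in>{1..m}. G1 k j = qcnj \<mu> * G2 k j * \<mu>"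
    using hermitian_unit_conj_if_upper[of m G1 G2 \<mu>, OF seminormalized_gram_hermitian[OF assms(1)]
        seminormalized_gram_hermitian[OF assms(2)] upper] by blast
qed

theorem lemma8p7:
  fixes n m i :: nat and G1 G2 :: "nat \<Rightarrow> nat \<Rightarrow> quat"
  assumes "n \<ge> 1" and "m \<ge> 4" and "3 \<le> i" and "i \<le> m"
    and "seminormalized_gram n m i G1"
    and "seminormalized_gram n m i G2"
  shows "gram_equiv m G1 G2 \<longleftrightarrow> sp1_orbit (VG m i G1) = sp1_orbit (VG m i G2)"
proof -
  have "semi_normalized m i G1" "semi_normalized m i G2"
    using assms(5,6) unfolding seminormalized_gram_def by auto
  then have "gram_equiv m G1 G2 \<longleftrightarrow>
      (\<exists>\<mu>. qnorm \<mu> = 1 \<and> (\<forall>k\<in>{1..m}. \<forall>j\<in>{1..m}. G1 k j = qcnj \<mu> * G2 k j * \<mu>))"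
    using assms(3,4) by (rule gram_equiv_iff_unit_conj[rotated 2])
  also have "\<dots> \<longleftrightarrow> (\<exists>\<mu>. qnorm \<mu> = 1 \<and> VG m i G1 = map (\<lambda>x. qcnj \<mu> * x * \<mu>) (VG m i G2))"
    using seminormalized_gram_unit_conj_iff[OF assms(5,6)] by blast
  also have "\<dots> \<longleftrightarrow> sp1_orbit (VG m i G1) = sp1_orbit (VG m i G2)"
    by (rule sp1_orbit_eq_iff[symmetric])
  finally show ?thesis .
qed

end
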